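(* For $\mathbb P_F$-almost every realization $f:\mathbb Z\to[-c,c]$ of $F$ the following holds: if $(t_n)$ is a sequence with $t_n\ge1$ and $t_n\to t$, then \[ \lim_{n\to\infty}\frac{\bar A(B,f;\lceil t_nn\rceil,n)}{n}=-t\,\Lambda(1/t)\quad\mathbb P_B\text{-almost surely}, \qquad \lim_{n\to\infty}\frac{\mathbb E_B\bar A(B,f;\lceil t_nn\rceil,n)}{n}=-t\,\Lambda(1/t). \]
   Context: Let $c>0$, $q>0$, $\kappa>-1$. $F=(F(x))_{x\in\mathbb Z}$ and $B=(B(i))_{i\in\mathbb Z}$ are mutually independent families of i.i.d. random variables, $\mathbb P(B(i)=\pm1)=1/2$, and $F(x)$ has a density $\varrho$ that is even, continuous, strictly positive on $(-c,c)$, zero outside $(-c,c)$, with $\lim_{x\to c}\varrho(x)/|c-x|^{\kappa}=q$. $\mathbb P_F,\mathbb P_B$ denote the laws of $F$ and $B$, and $\mathbb E_B$ expectation over $B$ only. A lazy walk satisfies $|\gamma(i+1)-\gamma(i)|\le1$; for $f:\mathbb Z\to[-c,c]$ the action of a lazy walk $\gamma$ on $\{0,\dots,m\}$ is $A(B,f;\gamma)=\sum_{i=1}^mB(i)f(\gamma(i))$, and $\bar A(B,f;m,k)$ is the minimal action over lazy walks from $(0,0)$ to $(m,k)$. The shape function $\Lambda:[-1,1]\to[0,c]$ is the deterministic function with $\bar A(B,F;n,[\alpha n])/n\to-\Lambda(\alpha)$ almost surely, $[\cdot]$ rounding towards $0$. *)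

theory Defs
  imports "HOL-Probability.Probability"
begin

definition lazy_walk :: "(nat \<Rightarrow> int) \<Rightarrow> nat \<Rightarrow> bool" where
  "lazy_walk \<gamma> m \<longleftrightarrow> (\<forall>i<m. \<bar>\<gamma> (Suc i) - \<gamma> i\<bar> \<le> 1)"

definition action :: "(int \<Rightarrow> real) \<Rightarrow> (int \<Rightarrow> real) \<Rightarrow> (nat \<Rightarrow> int) \<Rightarrow> nat \<Rightarrow> real" where
  "action b f \<gamma> m = (\<Sum>i=1..m. b (int i) * f (\<gamma> i))"

definition min_action :: "(int \<Rightarrow> real) \<Rightarrow> (int \<Rightarrow> real) \<Rightarrow> nat \<Rightarrow> int \<Rightarrow> real" where
  "min_action b f m k =
     Inf {action b f \<gamma> m | \<gamma>. lazy_walk \<gamma> m \<and> \<gamma> 0 = 0 \<and> \<gamma> m = k}"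

definition round0 :: "real \<Rightarrow> int" where
  "round0 x = (if x \<ge> 0 then \<lfloor>x\<rfloor> else \<lceil>x\<rceil>)"

definition law_F :: "(real \<Rightarrow> real) \<Rightarrow> (int \<Rightarrow> real) measure" where
  "law_F \<rho> = (\<Pi>\<^sub>M i\<in>(UNIV::int set). density lborel (\<lambda>x. ennreal (\<rho> x)))"

definition law_B :: "(int \<Rightarrow> real) measure" where
  "law_B = (\<Pi>\<^sub>M i\<in>(UNIV::int set). measure_pmf (pmf_of_set {-1, 1::real}))"

definition is_shape_function :: "(real \<Rightarrow> real) \<Rightarrow> (real \<Rightarrow> real) \<Rightarrow> bool" where
  "is_shape_function \<rho> \<Lambda> \<longleftrightarrow>
     (\<forall>\<alpha>\<in>{-1..1}. AE \<omega> in (law_F \<rho> \<Otimes>\<^sub>M law_B).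
        (\<lambda>n. min_action (snd \<omega>) (fst \<omega>) n (round0 (\<alpha> * real n)) / real n)
          \<longlonglongrightarrow> - \<Lambda> \<alpha>)"

end

(* A time-stretched minimal action is compared with the minimal actions at rational stretches,
   where convergence to the shape function holds for almost every field and sign sequence:
   prolonging an optimal walk by lazy steps costs at most c per step, so the action depends
   Lipschitz-continuously on the stretch, and it remains to show that t \<mapsto> t \<Lambda>(1/t) is
   continuous. The same comparison gives continuity of \<Lambda> inside (0,1); at slope 1 it only gives
   a lower bound, and the upper bound comes from Hoeffding's inequality combined with a count of
   the walks whose endpoint is close to the diagonal. The statement for expectations then
   follows by dominated convergence, since the minimal action over m steps is at most c m in
   absolute value. *)

theory Submission
  imports Defs
begin

section \<open>Walks and minimal actions\<close>

definition walk_of_steps :: "(nat \<Rightarrow> int) \<Rightarrow> nat \<Rightarrow> int" where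
  "walk_of_steps s i = (\<Sum>j<i. s j)"

definition step_seqs :: "nat \<Rightarrow> int \<Rightarrow> (nat \<Rightarrow> int) set" where
  "step_seqs m k = {s \<in> {..<m} \<rightarrow>\<^sub>E {-1, 0, 1}. walk_of_steps s m = k}"

lemma finite_step_seqs: "finite (step_seqs m k)"
  unfolding step_seqs_def by (simp add: finite_PiE)

lemma lazy_walk_of_steps:
  assumes "s \<in> step_seqs m k"
  shows "lazy_walk (walk_of_steps s) m" "walk_of_steps s 0 = 0" "walk_of_steps s m = k"
proof -
  show "lazy_walk (walk_of_steps s) m" unfolding lazy_walk_def
  proof (intro allI impI)
    fix i assume "i < m"
    then have "s i \<in> {-1, 0, 1}" using assms by (auto simp: step_seqs_def PiE_iff)
    then show "\<bar>walk_of_steps s (Suc i) - walk_of_steps s i\<bar> \<le> 1" by (auto simp: walk_of_steps_def)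
  qed
qed (use assms in \<open>auto simp: step_seqs_def walk_of_steps_def\<close>)

lemma steps_of_lazy_walk:
  assumes "lazy_walk \<gamma> m" "\<gamma> 0 = 0" "\<gamma> m = k"
  obtains s where "s \<in> step_seqs m k" "\<And>i. i \<le> m \<Longrightarrow> walk_of_steps s i = \<gamma> i"
proof
  define s where "s = restrict (\<lambda>j. \<gamma> (Suc j) - \<gamma> j) {..<m}"
  show walk: "walk_of_steps s i = \<gamma> i" if "i \<le> m" for i
  proof -
    have "walk_of_steps s i = (\<Sum>j<i. \<gamma> (Suc j) - \<gamma> j)"
      unfolding walk_of_steps_def s_def using that by (intro sum.cong) auto
    also have "\<dots> = \<gamma> i" using assms(2) by (simp add: sum_lessThan_telescope)
    finally show ?thesis .
  qed
  show "s \<in> step_seqs m k"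
    using assms(1,3) walk[of m] unfolding step_seqs_def s_def lazy_walk_def by (auto simp: abs_le_iff)
qed

lemma action_cong:
  "(\<And>i. 1 \<le> i \<Longrightarrow> i \<le> m \<Longrightarrow> \<gamma> i = \<gamma>' i) \<Longrightarrow> action b f \<gamma> m = action b f \<gamma>' m"
  unfolding action_def by (intro sum.cong) auto

lemma min_action_eq_Inf:
  "min_action b f m k = Inf ((\<lambda>s. action b f (walk_of_steps s) m) ` step_seqs m k)"
proof -
  have "{action b f \<gamma> m | \<gamma>. lazy_walk \<gamma> m \<and> \<gamma> 0 = 0 \<and> \<gamma> m = k}
        = (\<lambda>s. action b f (walk_of_steps s) m) ` step_seqs m k" (is "?A = ?B")
  proof
    show "?A \<subseteq> ?B"
    proof
      fix a assume "a \<in> ?A"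
      then obtain \<gamma> where a: "a = action b f \<gamma> m" and \<gamma>: "lazy_walk \<gamma> m" "\<gamma> 0 = 0" "\<gamma> m = k"
        by auto
      obtain s where s: "s \<in> step_seqs m k" "\<And>i. i \<le> m \<Longrightarrow> walk_of_steps s i = \<gamma> i"
        using steps_of_lazy_walk[OF \<gamma>] by blast
      then have "a = action b f (walk_of_steps s) m" unfolding a by (intro action_cong) auto
      then show "a \<in> ?B" using s(1) by blast
    qed
    show "?B \<subseteq> ?A" using lazy_walk_of_steps by blast
  qed
  then show ?thesis unfolding min_action_def by simp
qed

lemma min_action_le:
  assumes "lazy_walk \<gamma> m" "\<gamma> 0 = 0" "\<gamma> m = k"
  shows "min_action b f m k \<le> action b f \<gamma> m"
proof -
  obtain s where s: "s \<in> step_seqs m k" "\<And>i. i \<le> m \<Longrightarrow> walk_of_steps s i = \<gamma> i"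
    using steps_of_lazy_walk[OF assms] by blast
  have "min_action b f m k \<le> action b f (walk_of_steps s) m"
    unfolding min_action_eq_Inf using s(1) finite_step_seqs by (intro cInf_lower bdd_below_finite) auto
  also have "\<dots> = action b f \<gamma> m" using s(2) by (intro action_cong) auto
  finally show ?thesis .
qed

lemma lazy_walk_exists:
  assumes "\<bar>k\<bar> \<le> int m"
  obtains \<gamma> where "lazy_walk \<gamma> m" "\<gamma> 0 = 0" "\<gamma> m = k"
proof
  define \<gamma> where "\<gamma> i = sgn k * int (min i (nat \<bar>k\<bar>))" for i
  show "lazy_walk \<gamma> m" unfolding lazy_walk_def \<gamma>_def
  proof (intro allI impI)
    fix i
    show "\<bar>sgn k * int (min (Suc i) (nat \<bar>k\<bar>)) - sgn k * int (min i (nat \<bar>k\<bar>))\<bar> \<le> 1"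
      by (cases "k < 0"; cases "k = 0"; cases "i < nat \<bar>k\<bar>") (auto simp: min_def)
  qed
  show "\<gamma> 0 = 0" by (simp add: \<gamma>_def)
  show "\<gamma> m = k" unfolding \<gamma>_def using assms by (cases "k < 0"; cases "k = 0") (auto simp: min_def)
qed

lemma step_seqs_nonempty:
  assumes "\<bar>k\<bar> \<le> int m"
  shows "step_seqs m k \<noteq> {}"
proof -
  obtain \<gamma> where "lazy_walk \<gamma> m" "\<gamma> 0 = 0" "\<gamma> m = k"
    using lazy_walk_exists[OF assms] by blast
  then show ?thesis using steps_of_lazy_walk by blast
qed

lemma min_action_eq_Min:
  assumes "\<bar>k\<bar> \<le> int m"
  shows "min_action b f m k = (MIN s \<in> step_seqs m k. action b f (walk_of_steps s) m)"
  unfolding min_action_eq_Inf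
  using finite_step_seqs step_seqs_nonempty[OF assms] by (intro cInf_eq_Min) auto

lemma min_action_attained:
  assumes "\<bar>k\<bar> \<le> int m"
  obtains s where "s \<in> step_seqs m k" "min_action b f m k = action b f (walk_of_steps s) m"
proof -
  have "min_action b f m k \<in> (\<lambda>s. action b f (walk_of_steps s) m) ` step_seqs m k"
    unfolding min_action_eq_Min[OF assms]
    using finite_step_seqs step_seqs_nonempty[OF assms] by (intro Min_in) auto
  then show ?thesis using that by blast
qed

lemma sum_weighted_abs_le:
  fixes b :: "int \<Rightarrow> real"
  assumes b: "\<And>i. \<bar>b i\<bar> \<le> 1" and f: "\<And>x. \<bar>f x\<bar> \<le> c"
  shows "\<bar>\<Sum>i\<in>I. b (int i) * f (\<gamma> i)\<bar> \<le> c * card I"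
proof -
  have "\<bar>b (int i) * f (\<gamma> i)\<bar> \<le> c" for i
  proof -
    have "\<bar>b (int i)\<bar> * \<bar>f (\<gamma> i)\<bar> \<le> 1 * c"
      by (rule mult_mono[OF b f]) simp_all
    then show ?thesis by (simp add: abs_mult)
  qed
  then have "(\<Sum>i\<in>I. \<bar>b (int i) * f (\<gamma> i)\<bar>) \<le> of_nat (card I) * c"
    by (rule sum_bounded_above)
  then show ?thesis by (intro order_trans[OF sum_abs]) (simp add: mult.commute)
qed

lemma min_action_abs_le:
  assumes "\<And>i. \<bar>b i\<bar> \<le> 1" "\<And>x. \<bar>f x\<bar> \<le> c" "\<bar>k\<bar> \<le> int m"
  shows "\<bar>min_action b f m k\<bar> \<le> c * m"
proof -
  obtain s where "min_action b f m k = action b f (walk_of_steps s) m"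
    using min_action_attained[OF assms(3)] by metis
  moreover have "\<bar>\<Sum>i\<in>{1..m}. b (int i) * f (walk_of_steps s i)\<bar> \<le> c * card {1..m}"
    by (rule sum_weighted_abs_le) (use assms in auto)
  ultimately show ?thesis by (simp add: action_def)
qed

lemma lazy_walk_append:
  assumes \<gamma>: "lazy_walk \<gamma> m" and \<delta>: "lazy_walk \<delta> p" "\<delta> 0 = 0"
  shows "lazy_walk (\<lambda>i. if i \<le> m then \<gamma> i else \<gamma> m + \<delta> (i - m)) (m + p)"
  unfolding lazy_walk_def
proof (intro allI impI)
  fix i assume i: "i < m + p"
  consider "i < m" | "i = m" | "m < i" by linarith
  then show "\<bar>(if Suc i \<le> m then \<gamma> (Suc i) else \<gamma> m + \<delta> (Suc i - m))
             - (if i \<le> m then \<gamma> i else \<gamma> m + \<delta> (i - m))\<bar> \<le> 1"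
  proof cases
    case 1
    then show ?thesis using \<gamma> by (simp add: lazy_walk_def)
  next
    case 2
    then have "\<bar>\<delta> (Suc 0) - \<delta> 0\<bar> \<le> 1" using \<delta>(1) i unfolding lazy_walk_def by simp
    then show ?thesis using 2 \<delta>(2) by simp
  next
    case 3
    then have "\<bar>\<delta> (Suc (i - m)) - \<delta> (i - m)\<bar> \<le> 1" using \<delta>(1) i unfolding lazy_walk_def by simp
    then show ?thesis using 3 by (simp add: Suc_diff_le)
  qed
qed

lemma min_action_extend:
  assumes b: "\<And>i. \<bar>b i\<bar> \<le> 1" and f: "\<And>x. \<bar>f x\<bar> \<le> c"
    and k: "\<bar>k\<bar> \<le> int m" and mm: "m \<le> m'" and kk: "\<bar>k' - k\<bar> \<le> int m' - int m"
  shows "min_action b f m' k' \<le> min_action b f m k + c * (real m' - real m)"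
proof -
  obtain s where s: "s \<in> step_seqs m k" "min_action b f m k = action b f (walk_of_steps s) m"
    using min_action_attained[OF k] by metis
  obtain \<delta> where \<delta>: "lazy_walk \<delta> (m' - m)" "\<delta> 0 = 0" "\<delta> (m' - m) = k' - k"
    using lazy_walk_exists[of "k' - k" "m' - m"] kk mm by (auto simp: of_nat_diff)
  define \<gamma> where "\<gamma> i = (if i \<le> m then walk_of_steps s i else walk_of_steps s m + \<delta> (i - m))" for i
  have s_walk: "lazy_walk (walk_of_steps s) m" "walk_of_steps s 0 = 0" "walk_of_steps s m = k"
    by (rule lazy_walk_of_steps[OF s(1)])+
  have "lazy_walk \<gamma> m'"
    using lazy_walk_append[OF s_walk(1) \<delta>(1,2)] mm unfolding \<gamma>_def by simp
  moreover have "\<gamma> 0 = 0" "\<gamma> m' = k'"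
    using s_walk \<delta> mm by (auto simp: \<gamma>_def)
  ultimately have "min_action b f m' k' \<le> action b f \<gamma> m'" by (rule min_action_le)
  also have "\<dots> = action b f \<gamma> m + (\<Sum>i\<in>{m<..m'}. b (int i) * f (\<gamma> i))"
  proof -
    have "{1..m'} = {1..m} \<union> {m<..m'}" using mm by auto
    then show ?thesis unfolding action_def by (simp add: sum.union_disjoint ivl_disj_int_two(8))
  qed
  also have "action b f \<gamma> m = min_action b f m k"
    unfolding s(2) by (intro action_cong) (simp add: \<gamma>_def)
  also have "(\<Sum>i\<in>{m<..m'}. b (int i) * f (\<gamma> i)) \<le> c * (real m' - real m)"
  proof -
    have "\<bar>\<Sum>i\<in>{m<..m'}. b (int i) * f (\<gamma> i)\<bar> \<le> c * card {m<..m'}"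
      by (rule sum_weighted_abs_le) (use b f in auto)
    then show ?thesis using mm by (simp add: of_nat_diff)
  qed
  finally show ?thesis by simp
qed

lemma lazy_walk_diagonal:
  assumes lw: "lazy_walk \<gamma> m" and "\<gamma> 0 = 0" "\<gamma> m = int m" and "i \<le> m"
  shows "\<gamma> i = int i"
proof -
  have incr: "\<gamma> j - \<gamma> i \<le> int j - int i" if "i \<le> j" "j \<le> m" for i j
    using that
  proof (induction j)
    case (Suc j)
    show ?case
    proof (cases "i = Suc j")
      case False
      then have "i \<le> j" "\<bar>\<gamma> (Suc j) - \<gamma> j\<bar> \<le> 1"
        using Suc.prems lw unfolding lazy_walk_def by auto
      then show ?thesis using Suc by simp
    qed simp
  qed simp
  show ?thesis using incr[of 0 i] incr[of i m] assms by simp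
qed

lemma min_action_diagonal: "min_action b f m (int m) = (\<Sum>i=1..m. b (int i) * f (int i))"
proof -
  obtain s where s: "s \<in> step_seqs m (int m)" "min_action b f m (int m) = action b f (walk_of_steps s) m"
    using min_action_attained[of "int m" m] by auto
  show ?thesis unfolding s(2) action_def
    using lazy_walk_diagonal[OF lazy_walk_of_steps[OF s(1)]] by (intro sum.cong) auto
qed

section \<open>Rounding and scaled limits\<close>

lemma round0_abs_le_and_dist_le: "\<bar>real_of_int (round0 x)\<bar> \<le> \<bar>x\<bar> \<and> \<bar>real_of_int (round0 x) - x\<bar> \<le> 1"
proof (cases "x \<ge> 0")
  case True
  then have "round0 x = \<lfloor>x\<rfloor>" "0 \<le> \<lfloor>x\<rfloor>" by (simp_all add: round0_def)
  then show ?thesis using True floor_correct[of x] by (simp add: abs_le_iff) linarith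
next
  case False
  then have "round0 x = \<lceil>x\<rceil>" "\<lceil>x\<rceil> \<le> 0" by (simp_all add: round0_def ceiling_le_iff)
  then show ?thesis using False ceiling_correct[of x] by (simp add: abs_le_iff)
qed

lemma round0_abs_le: "\<bar>real_of_int (round0 x)\<bar> \<le> \<bar>x\<bar>"
  using round0_abs_le_and_dist_le by blast

lemma round0_dist_le: "\<bar>real_of_int (round0 x) - x\<bar> \<le> 1"
  using round0_abs_le_and_dist_le by blast

lemma abs_round0_mult_le:
  assumes "\<bar>\<alpha>\<bar> \<le> 1"
  shows "\<bar>round0 (\<alpha> * real m)\<bar> \<le> int m"
proof -
  have "\<bar>real_of_int (round0 (\<alpha> * real m))\<bar> \<le> real m"
    using round0_abs_le[of "\<alpha> * real m"] mult_right_mono[OF assms, of "real m"]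
    by (simp add: abs_mult)
  then show ?thesis by linarith
qed

lemma real_nat_ceiling_bounds:
  assumes "0 \<le> y"
  shows "y \<le> real (nat \<lceil>y\<rceil>)" "real (nat \<lceil>y\<rceil>) \<le> y + 1"
  using assms ceiling_correct[of y] by linarith+

lemma nat_ceiling_stretched_ge:
  assumes "t \<ge> 1"
  shows "n \<le> nat \<lceil>t * real n\<rceil>"
proof -
  have "real n \<le> t * real n" using mult_right_mono[OF assms, of "real n"] by simp
  also have "\<dots> \<le> real_of_int \<lceil>t * real n\<rceil>" by (rule le_of_int_ceiling)
  finally have "int n \<le> \<lceil>t * real n\<rceil>" by linarith
  then show ?thesis by (simp add: le_nat_iff)
qed

lemma round0_of_stretched_time:
  assumes t: "t \<ge> 1"
  shows "round0 (1 / t * real (nat \<lceil>t * real n\<rceil>)) = int n"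
proof -
  define m where "m = real (nat \<lceil>t * real n\<rceil>)"
  have "t * real n \<le> m" "m < t * real n + 1"
    using ceiling_correct[of "t * real n"] t by (auto simp: m_def)
  then have "real n \<le> m / t" "m / t < real n + 1"
    using t by (simp_all add: field_simps)
  moreover have "0 \<le> m" unfolding m_def by (rule of_nat_0_le_iff)
  then have "0 \<le> m / t" using t by simp
  then have "round0 (m / t) = \<lfloor>m / t\<rfloor>" by (simp add: round0_def)
  ultimately show ?thesis by (simp add: m_def floor_eq_iff)
qed

lemma ceiling_mult_ratio_tendsto:
  assumes "ts \<longlonglongrightarrow> t" "\<And>n. ts n \<ge> 0"
  shows "(\<lambda>n. real (nat \<lceil>ts n * real n\<rceil>) / real n) \<longlonglongrightarrow> t"
proof (rule tendsto_sandwich[of ts _ _ "\<lambda>n. ts n + 1 / real n"])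
  have bounds: "ts n * real n \<le> real (nat \<lceil>ts n * real n\<rceil>)"
      "real (nat \<lceil>ts n * real n\<rceil>) \<le> ts n * real n + 1" for n
    using real_nat_ceiling_bounds[of "ts n * real n"] assms(2)[of n] by simp_all
  show "\<forall>\<^sub>F n in sequentially. ts n \<le> real (nat \<lceil>ts n * real n\<rceil>) / real n"
    using eventually_gt_at_top[of 0] by eventually_elim (use bounds in \<open>simp add: field_simps\<close>)
  show "\<forall>\<^sub>F n in sequentially. real (nat \<lceil>ts n * real n\<rceil>) / real n \<le> ts n + 1 / real n"
    using eventually_gt_at_top[of 0] by eventually_elim (use bounds in \<open>simp add: field_simps\<close>)
  have "(\<lambda>n. 1 / real n) \<longlonglongrightarrow> 0" by real_asymp
  then show "(\<lambda>n. ts n + 1 / real n) \<longlonglongrightarrow> t" using tendsto_add[OF assms(1)] by fastforce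
qed (rule assms(1))

lemma round0_mult_ratio_tendsto:
  assumes "(\<lambda>n. real (m n) / real n) \<longlonglongrightarrow> x"
  shows "(\<lambda>n. real_of_int (round0 (\<alpha> * real (m n))) / real n) \<longlonglongrightarrow> \<alpha> * x"
proof -
  have "(\<lambda>n. (real_of_int (round0 (\<alpha> * real (m n))) - \<alpha> * real (m n)) / real n) \<longlonglongrightarrow> 0"
  proof (rule Lim_null_comparison)
    show "\<forall>\<^sub>F n in sequentially. norm ((real_of_int (round0 (\<alpha> * real (m n))) - \<alpha> * real (m n)) / real n)
            \<le> 1 / real n"
      using round0_dist_le by (auto simp: divide_right_mono)
    show "(\<lambda>n. 1 / real n) \<longlonglongrightarrow> 0" by real_asymp
  qed
  from tendsto_add[OF this tendsto_mult_left[OF assms, of \<alpha>]] show ?thesis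
    by (simp add: diff_divide_distrib)
qed

lemma tendsto_along_scaled_times:
  fixes g :: "nat \<Rightarrow> real"
  assumes g: "(\<lambda>M. g M / real M) \<longlonglongrightarrow> L" and x: "x > 0"
  shows "(\<lambda>n. g (nat \<lceil>x * real n\<rceil>) / real n) \<longlonglongrightarrow> L * x"
proof -
  define m where "m n = nat \<lceil>x * real n\<rceil>" for n
  have ratio: "(\<lambda>n. real (m n) / real n) \<longlonglongrightarrow> x"
    unfolding m_def using ceiling_mult_ratio_tendsto[of "\<lambda>_. x" x] x by simp
  have "filterlim (\<lambda>n. real (m n) / real n * real n) at_top sequentially"
    by (rule filterlim_tendsto_pos_mult_at_top[OF ratio x filterlim_real_sequentially])
  moreover have "\<forall>\<^sub>F n in sequentially. real (m n) / real n * real n = real (m n)"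
    using eventually_gt_at_top[of 0] by eventually_elim simp
  ultimately have "filterlim m sequentially sequentially"
    unfolding filterlim_sequentially_iff_filterlim_real using filterlim_cong by fastforce
  then have "(\<lambda>n. g (m n) / real (m n) * (real (m n) / real n)) \<longlonglongrightarrow> L * x"
    using filterlim_compose[OF g] ratio by (intro tendsto_mult) (simp_all add: o_def)
  moreover have "\<forall>\<^sub>F n in sequentially. g (m n) / real (m n) * (real (m n) / real n) = g (m n) / real n"
    using eventually_gt_at_top[of 0]
  proof eventually_elim
    case (elim n)
    then have "0 < x * real n" using x by simp
    then have "real (m n) > 0" using real_nat_ceiling_bounds(1)[of "x * real n"] unfolding m_def
      by linarith
    then show ?case by simp
  qed
  ultimately show ?thesis unfolding m_def by (rule Lim_transform_eventually)
qed

lemma rational_lower_approx: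
  fixes ts :: "nat \<Rightarrow> real"
  assumes lim: "ts \<longlonglongrightarrow> t" and ts: "\<And>n. ts n \<ge> 1" and h: "h > 0"
  obtains r where "r \<in> \<rat>" "1 \<le> r" "r \<le> t" "t - r < h" "\<forall>\<^sub>F n in sequentially. r \<le> ts n"
proof (cases "t = 1")
  case True
  then show ?thesis using that[of 1] h ts by auto
next
  case False
  moreover have "t \<ge> 1" using ts by (intro LIMSEQ_le_const[OF lim]) auto
  ultimately obtain r where "r \<in> \<rat>" "max 1 (t - h) < r" "r < t"
    using Rats_dense_in_real[of "max 1 (t - h)" t] h by auto
  moreover have "\<forall>\<^sub>F n in sequentially. r \<le> ts n"
    using order_tendstoD(1)[OF lim \<open>r < t\<close>] by eventually_elim simp
  ultimately show ?thesis using that[of r] by auto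
qed

lemma tendsto_sandwich_approx:
  fixes X :: "nat \<Rightarrow> real"
  assumes "\<And>e. e > 0 \<Longrightarrow> \<exists>lo up l u. lo \<longlonglongrightarrow> l \<and> up \<longlonglongrightarrow> u \<and> L - e < l \<and> u < L + e \<and>
             (\<forall>\<^sub>F n in sequentially. lo n \<le> X n \<and> X n \<le> up n)"
  shows "X \<longlonglongrightarrow> L"
proof (rule order_tendstoI)
  fix a assume "a < L"
  then obtain lo up l where "lo \<longlonglongrightarrow> l" "a < l" "\<forall>\<^sub>F n in sequentially. lo n \<le> X n \<and> X n \<le> up n"
    using assms[of "L - a"] by auto
  from order_tendstoD(1)[OF this(1,2)] this(3) show "\<forall>\<^sub>F n in sequentially. a < X n"
    by eventually_elim auto
next
  fix a assume "L < a"
  then obtain lo up u where "up \<longlonglongrightarrow> u" "u < a" "\<forall>\<^sub>F n in sequentially. lo n \<le> X n \<and> X n \<le> up n"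
    using assms[of "a - L"] by auto
  from order_tendstoD(2)[OF this(1,2)] this(3) show "\<forall>\<^sub>F n in sequentially. X n < a"
    by eventually_elim auto
qed

section \<open>Comparison of minimal actions at different scales\<close>

lemma eventually_round0_reachable:
  assumes m: "(\<lambda>n. real (m n) / real n) \<longlonglongrightarrow> x" and m': "(\<lambda>n. real (m' n) / real n) \<longlonglongrightarrow> x'"
    and cond: "\<bar>\<beta> * x' - \<alpha> * x\<bar> < x' - x"
  shows "\<forall>\<^sub>F n in sequentially.
           \<bar>round0 (\<beta> * real (m' n)) - round0 (\<alpha> * real (m n))\<bar> \<le> int (m' n) - int (m n)"
proof -
  let ?k = "\<lambda>n. real_of_int (round0 (\<alpha> * real (m n)))"
  let ?k' = "\<lambda>n. real_of_int (round0 (\<beta> * real (m' n)))"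
  have "(\<lambda>n. \<bar>?k' n / real n - ?k n / real n\<bar> - (real (m' n) / real n - real (m n) / real n))
          \<longlonglongrightarrow> \<bar>\<beta> * x' - \<alpha> * x\<bar> - (x' - x)"
    by (intro tendsto_intros round0_mult_ratio_tendsto m m')
  moreover have "\<bar>\<beta> * x' - \<alpha> * x\<bar> - (x' - x) < 0" using cond by simp
  ultimately have "\<forall>\<^sub>F n in sequentially. \<bar>?k' n / real n - ?k n / real n\<bar> - (real (m' n) / real n - real (m n) / real n) < 0"
    by (rule order_tendstoD(2))
  then show ?thesis using eventually_gt_at_top[of 0]
  proof eventually_elim
    case (elim n)
    then have "(\<bar>?k' n - ?k n\<bar> - (real (m' n) - real (m n))) / real n < 0"
      by (simp add: diff_divide_distrib[symmetric] abs_divide)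
    then have "\<bar>?k' n - ?k n\<bar> < real (m' n) - real (m n)" using elim(2) by (simp add: divide_less_0_iff)
    then show ?case by linarith
  qed
qed

text \<open>An optimal walk to the slope \<open>\<alpha>\<close> endpoint at time \<open>x n\<close> extends to the slope \<open>\<beta>\<close>
  endpoint at time \<open>x' n\<close>; the hypothesis on \<open>\<beta> x' - \<alpha> x\<close> makes that endpoint reachable.\<close>
lemma min_action_limit_compare:
  assumes b: "\<And>i. \<bar>b i\<bar> \<le> 1" and f: "\<And>y. \<bar>f y\<bar> \<le> c"
    and \<alpha>: "\<bar>\<alpha>\<bar> \<le> 1" and x: "0 < x" "x < x'"
    and cond: "\<bar>\<beta> * x' - \<alpha> * x\<bar> < x' - x"
    and lim_\<alpha>: "(\<lambda>n. min_action b f n (round0 (\<alpha> * real n)) / real n) \<longlonglongrightarrow> - L\<^sub>\<alpha>"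
    and lim_\<beta>: "(\<lambda>n. min_action b f n (round0 (\<beta> * real n)) / real n) \<longlonglongrightarrow> - L\<^sub>\<beta>"
  shows "x * L\<^sub>\<alpha> - c * (x' - x) \<le> x' * L\<^sub>\<beta>"
proof -
  define m where "m n = nat \<lceil>x * real n\<rceil>" for n
  define m' where "m' n = nat \<lceil>x' * real n\<rceil>" for n
  have ratio: "(\<lambda>n. real (m n) / real n) \<longlonglongrightarrow> x" "(\<lambda>n. real (m' n) / real n) \<longlonglongrightarrow> x'"
    unfolding m_def m'_def using ceiling_mult_ratio_tendsto[of "\<lambda>_. _"] x by simp_all
  have "\<forall>\<^sub>F n in sequentially. min_action b f (m' n) (round0 (\<beta> * real (m' n))) / real n
          \<le> min_action b f (m n) (round0 (\<alpha> * real (m n))) / real n + c * (real (m' n) / real n - real (m n) / real n)"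
    using eventually_round0_reachable[OF ratio cond]
  proof eventually_elim
    case (elim n)
    have "m n \<le> m' n" unfolding m_def m'_def using x by (intro nat_mono ceiling_mono mult_right_mono) simp_all
    then have "min_action b f (m' n) (round0 (\<beta> * real (m' n)))
          \<le> min_action b f (m n) (round0 (\<alpha> * real (m n))) + c * (real (m' n) - real (m n))"
      using b f abs_round0_mult_le[OF \<alpha>] elim by (intro min_action_extend) auto
    then show ?case by (simp add: divide_right_mono diff_divide_distrib[symmetric] add_divide_distrib[symmetric])
  qed
  moreover have "(\<lambda>n. min_action b f (m n) (round0 (\<alpha> * real (m n))) / real n) \<longlonglongrightarrow> - L\<^sub>\<alpha> * x"
    unfolding m_def using lim_\<alpha> x(1) by (rule tendsto_along_scaled_times)
  moreover have "(\<lambda>n. min_action b f (m' n) (round0 (\<beta> * real (m' n))) / real n) \<longlonglongrightarrow> - L\<^sub>\<beta> * x'"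
    unfolding m'_def using lim_\<beta> x by (intro tendsto_along_scaled_times) auto
  ultimately have "- L\<^sub>\<beta> * x' \<le> - L\<^sub>\<alpha> * x + c * (x' - x)"
    using ratio by (intro tendsto_le[OF _ tendsto_add[OF _ tendsto_mult_left[OF tendsto_diff]]]) auto
  then show ?thesis by (simp add: algebra_simps)
qed

lemma min_action_limit_abs_le:
  assumes b: "\<And>i. \<bar>b i\<bar> \<le> 1" and f: "\<And>y. \<bar>f y\<bar> \<le> c" and \<alpha>: "\<bar>\<alpha>\<bar> \<le> 1"
    and lim: "(\<lambda>n. min_action b f n (round0 (\<alpha> * real n)) / real n) \<longlonglongrightarrow> - L"
  shows "\<bar>L\<bar> \<le> c"
proof -
  have "\<forall>\<^sub>F n in sequentially. \<bar>min_action b f n (round0 (\<alpha> * real n)) / real n\<bar> \<le> c"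
    using eventually_gt_at_top[of 0]
  proof eventually_elim
    case (elim n)
    have "\<bar>min_action b f n (round0 (\<alpha> * real n))\<bar> \<le> c * real n"
      using b f abs_round0_mult_le[OF \<alpha>] by (rule min_action_abs_le)
    then show ?case using elim by (simp add: divide_le_eq)
  qed
  with tendsto_rabs[OF lim] show ?thesis by (simp add: tendsto_upperbound)
qed

lemma min_action_stretched_mono:
  assumes b: "\<And>i. \<bar>b i\<bar> \<le> 1" and f: "\<And>x. \<bar>f x\<bar> \<le> c" and rs: "1 \<le> r" "r \<le> s"
  shows "min_action b f (nat \<lceil>s * real n\<rceil>) (int n) / real n
           \<le> min_action b f (nat \<lceil>r * real n\<rceil>) (int n) / real n
              + c * (real (nat \<lceil>s * real n\<rceil>) / real n - real (nat \<lceil>r * real n\<rceil>) / real n)"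
proof -
  have extend: "min_action b f m' (int n) \<le> min_action b f m (int n) + c * (real m' - real m)"
    if "n \<le> m" "m \<le> m'" for m m'
    using that by (intro min_action_extend[OF b f]) auto
  have "n \<le> nat \<lceil>r * real n\<rceil>" using rs(1) by (rule nat_ceiling_stretched_ge)
  moreover have "nat \<lceil>r * real n\<rceil> \<le> nat \<lceil>s * real n\<rceil>"
    using rs by (intro nat_mono ceiling_mono mult_right_mono) auto
  ultimately have "min_action b f (nat \<lceil>s * real n\<rceil>) (int n)
      \<le> min_action b f (nat \<lceil>r * real n\<rceil>) (int n) + c * (real (nat \<lceil>s * real n\<rceil>) - real (nat \<lceil>r * real n\<rceil>))"
    by (rule extend)
  then show ?thesis
    by (simp add: divide_right_mono diff_divide_distrib[symmetric] add_divide_distrib[symmetric])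
qed

section \<open>The sign field\<close>

abbreviation rademacher :: "real measure" where
  "rademacher \<equiv> measure_pmf (pmf_of_set {-1, 1})"

lemma law_B_eq: "law_B = PiM UNIV (\<lambda>_::int. rademacher)"
  unfolding law_B_def by simp

interpretation law_B: product_prob_space "\<lambda>_::int. rademacher" UNIV
  by (rule product_prob_spaceI) (rule measure_pmf.prob_space_axioms)

lemma prob_space_law_B: "prob_space law_B"
  unfolding law_B_eq by (rule prob_space_PiM) (rule measure_pmf.prob_space_axioms)

lemma measurable_law_B_component: "(\<lambda>b. b i) \<in> measurable law_B rademacher"
  unfolding law_B_eq by (rule measurable_component_singleton) simp

lemma borel_measurable_law_B_component [measurable]: "(\<lambda>b. b i) \<in> borel_measurable law_B"
  using measurable_law_B_component by (rule measurable_compose) simp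

lemma AE_law_B_sign: "AE b in law_B. \<forall>i. b i \<in> {-1, 1}"
proof -
  have "AE b in law_B. b i \<in> {-1, 1}" for i
    unfolding law_B_eq
    by (rule law_B.AE_component) (auto simp: AE_measure_pmf_iff set_pmf_of_set)
  then show ?thesis by (subst AE_ball_countable[where X=UNIV, simplified]) auto
qed

lemma AE_law_B_abs_le_1: "AE b in law_B. \<forall>i. \<bar>b i\<bar> \<le> 1"
  using AE_law_B_sign
proof eventually_elim
  case (elim b)
  show ?case
  proof
    fix i show "\<bar>b i\<bar> \<le> 1" using elim[rule_format, of i] by auto
  qed
qed

lemma AE_obtain:
  assumes "prob_space M" "AE x in M. P x"
  obtains x where "P x"
  using eventually_happens'[OF prob_space.ae_filter_bot[OF assms(1)] assms(2)] by blast

lemma indep_vars_law_B: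
  assumes "J \<noteq> {}" "finite J"
  shows "prob_space.indep_vars law_B (\<lambda>_. rademacher) (\<lambda>j b. b j) J"
proof -
  interpret prob_space law_B by (rule prob_space_law_B)
  have "distr law_B (PiM J (\<lambda>_. rademacher)) (\<lambda>x. \<lambda>i\<in>J. x i) = PiM J (\<lambda>_. rademacher)"
    unfolding law_B_eq by (rule law_B.distr_PiM_restrict_finite) (use assms in auto)
  also have "\<dots> = PiM J (\<lambda>i. distr law_B rademacher (\<lambda>x. x i))"
    unfolding law_B_eq by (intro PiM_cong refl law_B.PiM_component[symmetric]) simp
  finally show ?thesis
    using indep_vars_iff_distr_eq_PiM[OF assms(1) measurable_law_B_component] by simp
qed

lemma integral_law_B_component: "(\<integral>b. b j \<partial>law_B) = 0"
proof -
  have "(\<integral>b. b j \<partial>law_B) = (\<integral>x. x \<partial>distr law_B rademacher (\<lambda>b. b j))"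
    by (subst integral_distr) (auto simp: law_B_eq intro: measurable_component_singleton)
  also have "distr law_B rademacher (\<lambda>b. b j) = rademacher"
    unfolding law_B_eq by (rule law_B.PiM_component) simp
  also have "(\<integral>x. x \<partial>rademacher) = 0"
    by (subst integral_pmf_of_set) auto
  finally show ?thesis .
qed

lemma law_B_weighted_sum_le_prob:
  fixes a :: "int \<Rightarrow> real"
  assumes J: "finite J" "J \<noteq> {}" and a: "\<And>j. j \<in> J \<Longrightarrow> \<bar>a j\<bar> \<le> c" and c: "c > 0" and x: "x \<ge> 0"
  shows "measure law_B {b \<in> space law_B. (\<Sum>j\<in>J. b j * a j) \<le> -x}
           \<le> exp (- x\<^sup>2 / (2 * c\<^sup>2 * card J))"
proof -
  interpret prob_space law_B by (rule prob_space_law_B)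
  interpret H: Hoeffding_ineq law_B J "\<lambda>j b. b j * a j" "\<lambda>_. -c" "\<lambda>_. c" 0
  proof unfold_locales
    show "finite J" by fact
    show "indep_vars (\<lambda>_. borel) (\<lambda>j b. b j * a j) J"
      by (rule indep_vars_compose2[OF indep_vars_law_B[OF J(2,1)]]) simp
    fix j assume "j \<in> J"
    have "AE b in law_B. b j \<in> {-1, 1}" using AE_law_B_sign by eventually_elim blast
    then show "AE b in law_B. b j * a j \<in> {-c..c}"
      by eventually_elim (use a[OF \<open>j \<in> J\<close>] in \<open>auto simp: abs_le_iff\<close>)
  qed (rule eq_reflection, simp add: integral_law_B_component)
  have "(\<Sum>i\<in>J. (c - - c)\<^sup>2) > 0" using J c by (simp add: card_gt_0_iff)
  then have "prob {b \<in> space law_B. (\<Sum>j\<in>J. b j * a j) \<le> 0 - x}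
               \<le> exp (- 2 * x\<^sup>2 / (\<Sum>i\<in>J. (c - - c)\<^sup>2))"
    by (rule H.Hoeffding_ineq_le[OF x])
  also have "- 2 * x\<^sup>2 / (\<Sum>i\<in>J. (c - - c)\<^sup>2) = - x\<^sup>2 / (2 * c\<^sup>2 * card J)"
    using J c by (simp add: power2_eq_square field_simps card_gt_0_iff)
  finally show ?thesis by simp
qed

lemma law_B_action_le_prob:
  assumes f: "\<And>x. \<bar>f x\<bar> \<le> c" and c: "c > 0" and m: "m \<ge> 1" and x: "x \<ge> 0"
  shows "measure law_B {b \<in> space law_B. action b f \<gamma> m \<le> - x} \<le> exp (- x\<^sup>2 / (2 * c\<^sup>2 * m))"
proof -
  have action_eq: "action b f \<gamma> m = (\<Sum>j\<in>{1..int m}. b j * f (\<gamma> (nat j)))" for b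
  proof -
    have "{1..int m} = int ` {1..m}" by (simp add: image_int_atLeastAtMost)
    then show ?thesis unfolding action_def by (simp add: sum.reindex)
  qed
  have "measure law_B {b \<in> space law_B. (\<Sum>j\<in>{1..int m}. b j * f (\<gamma> (nat j))) \<le> -x}
          \<le> exp (- x\<^sup>2 / (2 * c\<^sup>2 * card {1..int m}))"
    by (rule law_B_weighted_sum_le_prob) (use m c x f in auto)
  then show ?thesis by (simp add: action_eq)
qed

lemma borel_measurable_min_action:
  assumes "\<bar>k\<bar> \<le> int m"
  shows "(\<lambda>b. min_action b f m k) \<in> borel_measurable law_B"
  unfolding min_action_eq_Min[OF assms]
  by (intro borel_measurable_Min finite_step_seqs) (simp add: action_def)

text \<open>Each step sequence contributes at least \<open>l\<close> to the power of its number of non-up steps,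
  and \<open>(1 + 2 l)^m\<close> is the sum of these weights over all step sequences.\<close>
lemma card_step_seqs_weighted_le:
  fixes l :: real
  assumes l: "0 < l" "l \<le> 1" and k: "k \<le> int m"
  shows "real (card (step_seqs m k)) * l ^ nat (int m - k) \<le> (1 + 2 * l) ^ m"
proof -
  define w where "w v = (if v = (1::int) then 1 else l)" for v
  have w_nonneg: "w v \<ge> 0" for v using l by (simp add: w_def)
  have weight_le: "l ^ nat (int m - k) \<le> (\<Prod>j<m. w (s j))" if s: "s \<in> step_seqs m k" for s
  proof -
    have s_vals: "s j \<in> {-1, 0, 1}" if "j < m" for j using s that by (auto simp: step_seqs_def)
    have "int (\<Sum>j<m. nat (1 - s j)) = (\<Sum>j<m. 1 - s j)"
      unfolding of_nat_sum
    proof (intro sum.cong refl)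
      fix j assume "j \<in> {..<m}"
      then show "int (nat (1 - s j)) = 1 - s j" using s_vals[of j] by auto
    qed
    also have "\<dots> = int m - k" using s by (simp add: step_seqs_def walk_of_steps_def sum_subtractf)
    finally have "l ^ nat (int m - k) = (\<Prod>j<m. l ^ nat (1 - s j))"
      by (metis nat_int power_sum)
    also have "\<dots> \<le> (\<Prod>j<m. w (s j))"
    proof (rule prod_mono)
      fix j assume "j \<in> {..<m}"
      moreover have "l * l \<le> l" using l by (simp add: mult_le_cancel_left1)
      ultimately show "0 \<le> l ^ nat (1 - s j) \<and> l ^ nat (1 - s j) \<le> w (s j)"
        using s_vals[of j] l by (auto simp: w_def power2_eq_square numeral_2_eq_2)
    qed
    finally show ?thesis .
  qed
  have "real (card (step_seqs m k)) * l ^ nat (int m - k) \<le> (\<Sum>s\<in>step_seqs m k. \<Prod>j<m. w (s j))"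
    using sum_mono[OF weight_le] by simp
  also have "\<dots> \<le> (\<Sum>s\<in>{..<m} \<rightarrow>\<^sub>E {-1, 0, 1}. \<Prod>j<m. w (s j))"
    by (rule sum_mono2) (auto simp: finite_PiE step_seqs_def intro: prod_nonneg w_nonneg)
  also have "\<dots> = (\<Prod>j<m. \<Sum>v\<in>{-1, 0, 1::int}. w v)"
    by (rule prod_sum_PiE[symmetric]) auto
  also have "\<dots> = (1 + 2 * l) ^ m" by (simp add: w_def add.commute)
  finally show ?thesis .
qed

lemma prob_min_action_le:
  assumes f: "\<And>x. \<bar>f x\<bar> \<le> c" and c: "c > 0" and m: "m \<ge> 1" and x: "x \<ge> 0"
    and l: "0 < l" "l \<le> 1" and k: "\<bar>k\<bar> \<le> int m"
  shows "measure law_B {b \<in> space law_B. min_action b f m k \<le> -x} * l ^ nat (int m - k)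
           \<le> (1 + 2 * l) ^ m * exp (- x\<^sup>2 / (2 * c\<^sup>2 * m))"
proof -
  interpret prob_space law_B by (rule prob_space_law_B)
  let ?E = "\<lambda>s. {b \<in> space law_B. action b f (walk_of_steps s) m \<le> -x}"
  have "{b \<in> space law_B. min_action b f m k \<le> -x} \<subseteq> (\<Union>s\<in>step_seqs m k. ?E s)"
  proof
    fix b assume b: "b \<in> {b \<in> space law_B. min_action b f m k \<le> -x}"
    obtain s where "s \<in> step_seqs m k" "min_action b f m k = action b f (walk_of_steps s) m"
      using min_action_attained[OF k] by blast
    then show "b \<in> (\<Union>s\<in>step_seqs m k. ?E s)" using b by auto
  qed
  then have "prob {b \<in> space law_B. min_action b f m k \<le> -x} \<le> prob (\<Union>s\<in>step_seqs m k. ?E s)"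
    by (intro finite_measure_mono) (auto intro!: sets.finite_UN finite_step_seqs simp: action_def)
  also have "\<dots> \<le> (\<Sum>s\<in>step_seqs m k. prob (?E s))"
    by (rule finite_measure_subadditive_finite) (auto simp: finite_step_seqs action_def)
  also have "\<dots> \<le> real (card (step_seqs m k)) * exp (- x\<^sup>2 / (2 * c\<^sup>2 * m))"
    using sum_mono[OF law_B_action_le_prob[OF f c m x]] by simp
  finally have "prob {b \<in> space law_B. min_action b f m k \<le> -x} * l ^ nat (int m - k)
      \<le> real (card (step_seqs m k)) * l ^ nat (int m - k) * exp (- x\<^sup>2 / (2 * c\<^sup>2 * m))"
    using l by (simp add: mult_right_mono mult.commute mult.left_commute)
  also have "\<dots> \<le> (1 + 2 * l) ^ m * exp (- x\<^sup>2 / (2 * c\<^sup>2 * m))"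
    using k by (intro mult_right_mono card_step_seqs_weighted_le l) auto
  finally show ?thesis .
qed

lemma exp_div_power_le:
  fixes l :: real
  assumes l: "0 < l" "l \<le> 1" and K: "real K \<le> (1 - \<alpha>) * real M + 1"
    and key: "(1 - \<alpha>) * ln (1 / l) \<le> l"
  shows "exp (- (2 * l * real M)) / l ^ K \<le> exp (- l) ^ M / l"
proof -
  define L where "L = ln (1 / l)"
  have L: "L \<ge> 0" "l = exp (- L)" using l by (simp_all add: L_def exp_minus)
  have "l ^ K = exp (- (L * real K))"
    unfolding L(2) by (simp add: exp_of_nat_mult[symmetric] algebra_simps)
  then have "exp (- (2 * l * real M)) / l ^ K = exp (- (2 * l * real M)) / exp (- (L * real K))"
    by simp
  also have "\<dots> = exp (L * real K - 2 * l * real M)"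
    by (simp add: exp_diff exp_minus field_simps)
  also have "\<dots> \<le> exp (L - l * real M)"
  proof -
    have "L * real K \<le> L * ((1 - \<alpha>) * real M + 1)" using K L(1) by (rule mult_left_mono)
    moreover have "(1 - \<alpha>) * L * real M \<le> l * real M"
      using key by (intro mult_right_mono) (auto simp: L_def mult.commute)
    ultimately show ?thesis by (simp add: algebra_simps)
  qed
  also have "\<dots> = exp (- l) ^ M / l"
    using l by (simp add: L_def exp_diff exp_minus exp_of_nat_mult[symmetric] field_simps)
  finally show ?thesis .
qed

text \<open>With the weight \<open>l = \<delta>^2 / (8 c^2)\<close>, at most \<open>l^(k - M) exp (2 l M)\<close> step sequences end at
  \<open>k = round0 (\<alpha> M)\<close>, and Hoeffding bounds the probability of each by \<open>exp (- 4 l M)\<close>.\<close>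
lemma prob_min_action_le_decay:
  assumes f: "\<And>x. \<bar>f x\<bar> \<le> c" and c: "c > 0" and \<delta>: "\<delta> > 0" "\<delta> \<le> c"
    and \<alpha>: "0 < \<alpha>" "\<alpha> \<le> 1"
    and key: "(1 - \<alpha>) * ln (8 * c\<^sup>2 / \<delta>\<^sup>2) \<le> \<delta>\<^sup>2 / (8 * c\<^sup>2)"
    and M: "M \<ge> 1"
  shows "measure law_B {b \<in> space law_B. min_action b f M (round0 (\<alpha> * real M)) \<le> - (\<delta> * real M)}
           \<le> 8 * c\<^sup>2 / \<delta>\<^sup>2 * exp (- (\<delta>\<^sup>2 / (8 * c\<^sup>2))) ^ M"
proof -
  define l where "l = \<delta>\<^sup>2 / (8 * c\<^sup>2)"
  define k where "k = round0 (\<alpha> * real M)"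
  define P where "P = measure law_B {b \<in> space law_B. min_action b f M k \<le> - (\<delta> * real M)}"
  have "\<delta>\<^sup>2 \<le> c\<^sup>2" using \<delta> by (intro power_mono) auto
  then have "\<delta>\<^sup>2 \<le> 8 * c\<^sup>2" using zero_le_power2[of c] by linarith
  then have l: "0 < l" "l \<le> 1" "1 / l = 8 * c\<^sup>2 / \<delta>\<^sup>2" using \<delta> c by (simp_all add: l_def)
  have k: "\<bar>k\<bar> \<le> int M" using \<alpha> unfolding k_def by (intro abs_round0_mult_le) simp
  then have "real (nat (int M - k)) = real M - k" by simp
  then have K: "real (nat (int M - k)) \<le> (1 - \<alpha>) * real M + 1"
    using round0_dist_le[of "\<alpha> * real M"] by (simp add: k_def abs_le_iff algebra_simps)
  have "(\<delta> * real M)\<^sup>2 / (2 * c\<^sup>2 * real M) = 4 * l * real M"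
    using M c by (simp add: l_def power2_eq_square field_simps)
  then have "P * l ^ nat (int M - k) \<le> (1 + 2 * l) ^ M * exp (- (4 * l * real M))"
    using prob_min_action_le[OF f c M _ l(1,2) k, of "\<delta> * real M"] \<delta> by (simp add: P_def)
  also have "(1 + 2 * l) ^ M \<le> exp (2 * l) ^ M"
    using l exp_ge_add_one_self[of "2 * l"] by (intro power_mono) auto
  also have "exp (2 * l) ^ M * exp (- (4 * l * real M)) = exp (- (2 * l * real M))"
    by (simp add: exp_of_nat_mult[symmetric] exp_add[symmetric] algebra_simps)
  finally have "P \<le> exp (- (2 * l * real M)) / l ^ nat (int M - k)"
    using l by (simp add: pos_le_divide_eq)
  also have "\<dots> \<le> exp (- l) ^ M / l"
    using l(1,2) K key by (intro exp_div_power_le) (simp_all add: l(3) l_def)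
  finally show ?thesis using l(3) by (simp add: P_def k_def l_def ac_simps)
qed

lemma (in prob_space) not_AE_eventually_in_of_prob_tendsto_0:
  assumes sets: "\<And>n. U n \<in> events" and lim: "(\<lambda>n. prob (U n)) \<longlonglongrightarrow> 0"
  shows "\<not> (AE x in M. \<forall>\<^sub>F n in sequentially. x \<in> U n)"
proof
  assume "AE x in M. \<forall>\<^sub>F n in sequentially. x \<in> U n"
  define V where "V N = space M \<inter> (\<Inter>n\<in>{N..}. U n)" for N
  have V_sets: "V N \<in> events" for N
    unfolding V_def by (intro sets.Int sets.top sets.countable_INT') (auto simp: sets)
  have "AE x in M. x \<in> (\<Union>N. V N)"
    using \<open>AE x in M. \<forall>\<^sub>F n in sequentially. x \<in> U n\<close> AE_space
    by eventually_elim (auto simp: V_def eventually_sequentially)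
  then have "prob (\<Union>N. V N) = 1"
    by (subst (asm) AE_in_set_eq_1) (auto intro: V_sets)
  moreover have "(\<lambda>N. prob (V N)) \<longlonglongrightarrow> prob (\<Union>N. V N)"
    by (rule finite_Lim_measure_incseq) (use V_sets in \<open>auto simp: incseq_def V_def\<close>)
  ultimately have "(\<lambda>N. prob (V N)) \<longlonglongrightarrow> 1" by simp
  moreover have "prob (V N) \<le> prob (U N)" for N
    by (rule finite_measure_mono) (auto simp: V_def sets)
  ultimately have "(1::real) \<le> 0" by (intro LIMSEQ_le[OF _ lim]) auto
  then show False by simp
qed

lemma not_AE_eventually_min_action_le:
  assumes f: "\<And>x. \<bar>f x\<bar> \<le> c" and c: "c > 0" and \<delta>: "\<delta> > 0" "\<delta> \<le> c"
    and \<alpha>: "0 < \<alpha>" "\<alpha> \<le> 1"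
    and key: "(1 - \<alpha>) * ln (8 * c\<^sup>2 / \<delta>\<^sup>2) \<le> \<delta>\<^sup>2 / (8 * c\<^sup>2)"
  shows "\<not> (AE b in law_B. \<forall>\<^sub>F M in sequentially.
              min_action b f M (round0 (\<alpha> * real M)) \<le> - (\<delta> * real M))"
proof
  assume AE: "AE b in law_B. \<forall>\<^sub>F M in sequentially.
                min_action b f M (round0 (\<alpha> * real M)) \<le> - (\<delta> * real M)"
  interpret prob_space law_B by (rule prob_space_law_B)
  define U where "U M = {b \<in> space law_B. min_action b f M (round0 (\<alpha> * real M)) \<le> - (\<delta> * real M)}" for M
  have "\<bar>round0 (\<alpha> * real M)\<bar> \<le> int M" for M
    using \<alpha> by (intro abs_round0_mult_le) simp
  note [measurable] = borel_measurable_min_action[OF this]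
  have U_sets: "U M \<in> sets law_B" for M unfolding U_def by measurable
  define B where "B M = 8 * c\<^sup>2 / \<delta>\<^sup>2 * exp (- (\<delta>\<^sup>2 / (8 * c\<^sup>2))) ^ M" for M
  have U_le: "prob (U M) \<le> B M" if "M \<ge> 1" for M
    unfolding U_def B_def by (rule prob_min_action_le_decay[OF f c \<delta> \<alpha> key that])
  have "(\<lambda>M. prob (U M)) \<longlonglongrightarrow> 0"
  proof (rule Lim_null_comparison)
    show "\<forall>\<^sub>F M in sequentially. norm (prob (U M)) \<le> B M"
      using eventually_ge_at_top[of 1] by eventually_elim (simp add: U_le)
    show "B \<longlonglongrightarrow> 0"
      unfolding B_def using \<delta> c by (intro tendsto_mult_right_zero LIMSEQ_power_zero) simp
  qed
  moreover have "AE b in law_B. \<forall>\<^sub>F M in sequentially. b \<in> U M"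
    using AE AE_space by eventually_elim (auto simp: U_def)
  ultimately show False using not_AE_eventually_in_of_prob_tendsto_0[of U, OF U_sets] by blast
qed

lemma AE_min_action_limit_le:
  assumes f: "\<And>x. \<bar>f x\<bar> \<le> c" and c: "c > 0" and \<delta>: "\<delta> > 0" "\<delta> \<le> c"
    and \<alpha>: "0 < \<alpha>" "\<alpha> \<le> 1"
    and key: "(1 - \<alpha>) * ln (8 * c\<^sup>2 / \<delta>\<^sup>2) \<le> \<delta>\<^sup>2 / (8 * c\<^sup>2)"
    and lim: "AE b in law_B. (\<lambda>n. min_action b f n (round0 (\<alpha> * real n)) / real n) \<longlonglongrightarrow> - L"
  shows "L \<le> \<delta>"
proof (rule ccontr)
  assume "\<not> L \<le> \<delta>"
  have "AE b in law_B. \<forall>\<^sub>F n in sequentially.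
          min_action b f n (round0 (\<alpha> * real n)) \<le> - (\<delta> * real n)"
    using lim
  proof eventually_elim
    case (elim b)
    from order_tendstoD(2)[OF elim] \<open>\<not> L \<le> \<delta>\<close>
    have "\<forall>\<^sub>F n in sequentially. min_action b f n (round0 (\<alpha> * real n)) / real n < - \<delta>" by simp
    then show ?case
      using eventually_gt_at_top[of 0] by eventually_elim (simp add: field_simps)
  qed
  with not_AE_eventually_min_action_le[OF f c \<delta> \<alpha> key] show False by simp
qed

section \<open>The shape function\<close>

locale shape_setting =
  fixes c :: real and \<rho> \<Lambda> :: "real \<Rightarrow> real"
  assumes c_pos: "c > 0"
    and dens: "(\<rho> has_integral 1) UNIV"
    and cont: "continuous_on {-c<..<c} \<rho>"
    and pos: "\<And>x. x \<in> {-c<..<c} \<Longrightarrow> \<rho> x > 0"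
    and zero: "\<And>x. x \<notin> {-c<..<c} \<Longrightarrow> \<rho> x = 0"
    and shape: "is_shape_function \<rho> \<Lambda>"
begin

lemma borel_measurable_rho: "\<rho> \<in> borel_measurable borel"
proof -
  have "\<rho> = (\<lambda>x. indicator {-c<..<c} x *\<^sub>R \<rho> x)"
  proof
    fix x show "\<rho> x = indicator {-c<..<c} x *\<^sub>R \<rho> x"
      using zero[of x] by (cases "x \<in> {-c<..<c}") auto
  qed
  also have "\<dots> \<in> borel_measurable borel"
    by (rule borel_measurable_continuous_on_indicator[OF _ cont]) simp
  finally show ?thesis .
qed

lemma rho_nonneg: "\<rho> x \<ge> 0"
  using pos[of x] zero[of x] by (cases "x \<in> {-c<..<c}") auto

lemma prob_space_density_rho: "prob_space (density lborel (\<lambda>x. ennreal (\<rho> x)))"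
proof (rule prob_spaceI)
  have "emeasure (density lborel (\<lambda>x. ennreal (\<rho> x))) UNIV = (\<integral>\<^sup>+ x. ennreal (\<rho> x) \<partial>lborel)"
    using borel_measurable_rho by (subst emeasure_density) (auto simp: nn_integral_set_ennreal)
  also have "\<dots> = 1"
    using nn_integral_has_integral_lborel[OF borel_measurable_rho rho_nonneg dens] by simp
  finally show "emeasure (density lborel (\<lambda>x. ennreal (\<rho> x))) (space (density lborel (\<lambda>x. ennreal (\<rho> x)))) = 1"
    by simp
qed

lemma prob_space_law_F: "prob_space (law_F \<rho>)"
  unfolding law_F_def by (rule prob_space_PiM) (rule prob_space_density_rho)

lemma AE_law_F_abs_le: "AE f in law_F \<rho>. \<forall>x. \<bar>f x\<bar> \<le> c"
proof -
  have "AE y in density lborel (\<lambda>x. ennreal (\<rho> x)). \<bar>y\<bar> \<le> c"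
  proof (subst AE_density, use borel_measurable_rho in simp, rule AE_I2, intro impI)
    fix y assume "0 < ennreal (\<rho> y)"
    then have "y \<in> {-c<..<c}" using zero by force
    then show "\<bar>y\<bar> \<le> c" by auto
  qed
  then have "AE f in law_F \<rho>. \<bar>f x\<bar> \<le> c" for x
    unfolding law_F_def
    using AE_PiM_component[of UNIV "\<lambda>_. density lborel (\<lambda>x. ennreal (\<rho> x))" x "\<lambda>y. \<bar>y\<bar> \<le> c"]
      prob_space_density_rho by simp
  then show ?thesis by (subst AE_ball_countable[where X=UNIV, simplified]) auto
qed

definition typical :: "real set \<Rightarrow> (int \<Rightarrow> real) \<Rightarrow> (int \<Rightarrow> real) \<Rightarrow> bool" where
  "typical A f b \<longleftrightarrow> (\<forall>x. \<bar>f x\<bar> \<le> c) \<and> (\<forall>i. \<bar>b i\<bar> \<le> 1) \<and>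
     (\<forall>\<alpha>\<in>A. (\<lambda>n. min_action b f n (round0 (\<alpha> * real n)) / real n) \<longlonglongrightarrow> - \<Lambda> \<alpha>)"

lemma typicalD:
  assumes "typical A f b"
  shows "\<bar>f x\<bar> \<le> c" "\<bar>b i\<bar> \<le> 1"
    "\<alpha> \<in> A \<Longrightarrow> (\<lambda>n. min_action b f n (round0 (\<alpha> * real n)) / real n) \<longlonglongrightarrow> - \<Lambda> \<alpha>"
  using assms unfolding typical_def by auto

lemma AE_typical:
  assumes "countable A" "A \<subseteq> {-1..1}"
  shows "AE f in law_F \<rho>. AE b in law_B. typical A f b"
proof -
  interpret F: prob_space "law_F \<rho>" by (rule prob_space_law_F)
  interpret B: prob_space law_B by (rule prob_space_law_B)
  interpret pair_prob_space "law_F \<rho>" law_B ..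
  have "AE f in law_F \<rho>. AE b in law_B.
          (\<lambda>n. min_action b f n (round0 (\<alpha> * real n)) / real n) \<longlonglongrightarrow> - \<Lambda> \<alpha>" if "\<alpha> \<in> A" for \<alpha>
    using AE_pair[of "\<lambda>\<omega>. (\<lambda>n. min_action (snd \<omega>) (fst \<omega>) n (round0 (\<alpha> * real n)) / real n) \<longlonglongrightarrow> - \<Lambda> \<alpha>"]
      shape that assms(2) unfolding is_shape_function_def by auto
  then have "AE f in law_F \<rho>. \<forall>\<alpha>\<in>A. AE b in law_B.
          (\<lambda>n. min_action b f n (round0 (\<alpha> * real n)) / real n) \<longlonglongrightarrow> - \<Lambda> \<alpha>"
    using assms(1) by (subst AE_ball_countable) auto
  then show ?thesis using AE_law_F_abs_le
  proof eventually_elim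
    case (elim f)
    then have "AE b in law_B. \<forall>\<alpha>\<in>A. (\<lambda>n. min_action b f n (round0 (\<alpha> * real n)) / real n) \<longlonglongrightarrow> - \<Lambda> \<alpha>"
      using assms(1) by (subst AE_ball_countable) auto
    with AE_law_B_abs_le_1 show ?case
      by eventually_elim (use elim in \<open>simp add: typical_def\<close>)
  qed
qed

lemma exists_typical_field:
  assumes "countable A" "A \<subseteq> {-1..1}"
  shows "\<exists>f. (\<forall>x. \<bar>f x\<bar> \<le> c) \<and> (AE b in law_B. typical A f b)"
proof -
  obtain f where f: "AE b in law_B. typical A f b"
    using AE_obtain[OF prob_space_law_F AE_typical[OF assms]] .
  obtain b where "typical A f b" using AE_obtain[OF prob_space_law_B f] .
  then show ?thesis using f typicalD(1) by blast
qed

lemma exists_typical: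
  assumes "countable A" "A \<subseteq> {-1..1}"
  shows "\<exists>f b. typical A f b"
proof -
  obtain f where f: "AE b in law_B. typical A f b" using exists_typical_field[OF assms] by (elim exE conjE)
  obtain b where "typical A f b" using AE_obtain[OF prob_space_law_B f] .
  then show ?thesis by (intro exI)
qed

definition rational_slopes :: "real set" where
  "rational_slopes = (\<lambda>t. 1 / t) ` {t \<in> \<rat>. 1 \<le> t}"

lemma countable_rational_slopes: "countable rational_slopes"
  unfolding rational_slopes_def by (intro countable_image countable_subset[OF _ countable_rat]) auto

lemma rational_slopes_subset: "rational_slopes \<subseteq> {-1..1}"
  unfolding rational_slopes_def by (auto simp: field_simps)

lemma shape_abs_le:
  assumes "\<alpha> \<in> {-1..1}"
  shows "\<bar>\<Lambda> \<alpha>\<bar> \<le> c"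
proof -
  obtain f b where t: "typical {\<alpha>} f b" using exists_typical[of "{\<alpha>}"] assms by auto
  show ?thesis
    by (rule min_action_limit_abs_le[OF typicalD(2,1)[OF t] _ typicalD(3)[OF t]]) (use assms in auto)
qed

lemma shape_compare:
  assumes x: "0 < x" "x < x'" and \<alpha>: "\<alpha> \<in> {-1..1}" and \<beta>: "\<beta> \<in> {-1..1}"
    and cond: "\<bar>\<beta> * x' - \<alpha> * x\<bar> < x' - x"
  shows "x * \<Lambda> \<alpha> - c * (x' - x) \<le> x' * \<Lambda> \<beta>"
proof -
  obtain f b where t: "typical {\<alpha>, \<beta>} f b" using exists_typical[of "{\<alpha>, \<beta>}"] \<alpha> \<beta> by auto
  show ?thesis
    by (rule min_action_limit_compare[OF typicalD(2,1)[OF t] _ x cond typicalD(3)[OF t] typicalD(3)[OF t]])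
      (use \<alpha> in auto)
qed

lemma shape_le_of_near_1:
  assumes \<delta>: "\<delta> > 0" "\<delta> \<le> c" and \<alpha>: "0 < \<alpha>" "\<alpha> \<le> 1"
    and key: "(1 - \<alpha>) * ln (8 * c\<^sup>2 / \<delta>\<^sup>2) \<le> \<delta>\<^sup>2 / (8 * c\<^sup>2)"
  shows "\<Lambda> \<alpha> \<le> \<delta>"
proof -
  obtain f where f: "\<forall>x. \<bar>f x\<bar> \<le> c" and AE_typical_b: "AE b in law_B. typical {\<alpha>} f b"
    using exists_typical_field[of "{\<alpha>}"] \<alpha> by auto
  have lim: "AE b in law_B. (\<lambda>n. min_action b f n (round0 (\<alpha> * real n)) / real n) \<longlonglongrightarrow> - \<Lambda> \<alpha>"
    using AE_typical_b by eventually_elim (erule typicalD(3), simp)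
  show ?thesis by (rule AE_min_action_limit_le[where f=f and c=c and \<alpha>=\<alpha>]) (use lim f c_pos \<delta> \<alpha> key in auto)
qed

text \<open>At slope 1 the only walk is the diagonal, so the minimal action for \<open>-f\<close> is minus that
  for \<open>f\<close>; the large deviation bound applied to \<open>-f\<close> gives \<open>-\<Lambda> 1 \<le> \<delta>\<close> for every \<open>\<delta> > 0\<close>.\<close>
lemma shape_1_nonneg: "\<Lambda> 1 \<ge> 0"
proof (rule ccontr)
  assume "\<not> \<Lambda> 1 \<ge> 0"
  obtain f where f: "\<forall>x. \<bar>f x\<bar> \<le> c" and AE_typical_b: "AE b in law_B. typical {1} f b"
    using exists_typical_field[of "{1}"] by auto
  have lim: "AE b in law_B. (\<lambda>n. min_action b (\<lambda>x. - f x) n (round0 (1 * real n)) / real n) \<longlonglongrightarrow> - (- \<Lambda> 1)"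
    using AE_typical_b
  proof eventually_elim
    case (elim b)
    have "min_action b (\<lambda>x. - f x) n (round0 (1 * real n)) / real n
            = - (min_action b f n (round0 (1 * real n)) / real n)" for n
      by (simp add: round0_def min_action_diagonal sum_negf)
    then show ?case using tendsto_minus[OF typicalD(3)[OF elim]] by simp
  qed
  have "- \<Lambda> 1 \<le> min c (- \<Lambda> 1 / 2)"
    by (rule AE_min_action_limit_le[where f="\<lambda>x. - f x" and c=c and \<alpha>=1]) (use lim f c_pos \<open>\<not> \<Lambda> 1 \<ge> 0\<close> in auto)
  then show False using \<open>\<not> \<Lambda> 1 \<ge> 0\<close> c_pos by linarith
qed

lemma shape_ge_of_near_1:
  assumes "0 < \<beta>" "\<beta> \<le> 1"
  shows "\<Lambda> 1 - 2 * c * (1 - \<beta>) \<le> \<Lambda> \<beta>"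
proof (cases "\<beta> = 1")
  case False
  then have "\<beta> * \<Lambda> 1 - c * (1 - \<beta>) \<le> 1 * \<Lambda> \<beta>"
    using assms by (intro shape_compare) auto
  moreover have "(1 - \<beta>) * \<Lambda> 1 \<le> (1 - \<beta>) * c"
    using shape_abs_le[of 1] assms by (intro mult_left_mono) auto
  ultimately show ?thesis by (simp add: algebra_simps)
qed (use c_pos in simp)

lemma shape_dist_le:
  assumes \<alpha>: "\<alpha> \<in> {-1..1}" and \<beta>: "\<beta> \<in> {-1..1}" and d: "0 < d" "d < 1"
    and close: "\<bar>\<beta> - \<alpha>\<bar> + d * \<bar>\<beta>\<bar> < d"
  shows "\<bar>\<Lambda> \<beta> - \<Lambda> \<alpha>\<bar> \<le> 2 * c * d"
proof -
  have "\<bar>(\<beta> - \<alpha>) + d * \<beta>\<bar> < d" "\<bar>(\<alpha> - \<beta>) + d * \<beta>\<bar> < d"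
    using close abs_triangle_ineq[of "\<beta> - \<alpha>" "d * \<beta>"] abs_triangle_ineq[of "\<alpha> - \<beta>" "d * \<beta>"] d
    by (simp_all add: abs_mult abs_minus_commute)
  then have "\<bar>\<beta> * (1 + d) - \<alpha> * 1\<bar> < (1 + d) - 1" "\<bar>\<alpha> * 1 - \<beta> * (1 - d)\<bar> < 1 - (1 - d)"
    by (simp_all add: algebra_simps)
  then have "1 * \<Lambda> \<alpha> - c * ((1 + d) - 1) \<le> (1 + d) * \<Lambda> \<beta>"
    "(1 - d) * \<Lambda> \<beta> - c * (1 - (1 - d)) \<le> 1 * \<Lambda> \<alpha>"
    using \<alpha> \<beta> d by (intro shape_compare; simp)+
  moreover have "\<bar>d * \<Lambda> \<beta>\<bar> \<le> d * c"
    using shape_abs_le[OF \<beta>] d by (simp add: abs_mult)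
  ultimately show ?thesis by (simp add: algebra_simps abs_le_iff)
qed

lemma shape_near_interior:
  assumes \<alpha>: "0 < \<alpha>" "\<alpha> < 1" and e: "e > 0"
  shows "\<exists>\<eta>>0. \<forall>\<beta>\<in>{0<..1}. \<bar>\<beta> - \<alpha>\<bar> < \<eta> \<longrightarrow> \<bar>\<Lambda> \<beta> - \<Lambda> \<alpha>\<bar> < e"
proof -
  define d where "d = min (1/2) (e / (4 * c))"
  have d: "0 < d" "d < 1" "2 * c * d < e" using e c_pos by (auto simp: d_def min_def field_simps)
  show ?thesis
  proof (intro exI[of _ "d * (1 - \<alpha>) / 4"] conjI ballI impI)
    show "d * (1 - \<alpha>) / 4 > 0" using d \<alpha> by simp
    fix \<beta> assume \<beta>: "\<beta> \<in> {0<..1}" and near: "\<bar>\<beta> - \<alpha>\<bar> < d * (1 - \<alpha>) / 4"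
    have "d * (1 - \<alpha>) / 4 \<le> (1 - \<alpha>) / 4" using d \<alpha> by (simp add: mult_left_le_one_le)
    with near have "\<bar>\<beta> - \<alpha>\<bar> < (1 - \<alpha>) / 4" by (rule order.strict_trans2)
    then have "\<beta> \<le> \<alpha> + (1 - \<alpha>) / 4" by linarith
    then have "d * \<beta> \<le> d * (\<alpha> + (1 - \<alpha>) / 4)" using d by (intro mult_left_mono) auto
    moreover have "d * \<alpha> < d * 1" using d \<alpha> by (intro mult_strict_left_mono) auto
    ultimately have "\<bar>\<beta> - \<alpha>\<bar> + d * \<bar>\<beta>\<bar> < d"
      using near \<beta> by (simp add: field_simps)
    then have "\<bar>\<Lambda> \<beta> - \<Lambda> \<alpha>\<bar> \<le> 2 * c * d" using \<alpha> \<beta> d by (intro shape_dist_le) auto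
    then show "\<bar>\<Lambda> \<beta> - \<Lambda> \<alpha>\<bar> < e" using d by linarith
  qed
qed

text \<open>At slope 1 the comparison argument only bounds \<open>\<Lambda>\<close> from below; the upper bound comes
  from the large deviation estimate, whose hypothesis holds for \<open>\<beta>\<close> close enough to 1.\<close>
lemma shape_near_1:
  assumes e: "e > 0"
  shows "\<exists>\<eta>>0. \<forall>\<beta>\<in>{0<..1}. \<bar>\<beta> - 1\<bar> < \<eta> \<longrightarrow> \<bar>\<Lambda> \<beta> - \<Lambda> 1\<bar> < e"
proof -
  define \<delta> where "\<delta> = min c (e / 2)"
  define L where "L = ln (8 * c\<^sup>2 / \<delta>\<^sup>2)"
  define l where "l = \<delta>\<^sup>2 / (8 * c\<^sup>2)"
  have \<delta>: "\<delta> > 0" "\<delta> \<le> c" "\<delta> \<le> e / 2" using e c_pos by (auto simp: \<delta>_def)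
  have l: "l > 0" using \<delta> c_pos by (simp add: l_def)
  have "\<delta>\<^sup>2 \<le> c\<^sup>2" using \<delta> by (intro power_mono) auto
  then have "\<delta>\<^sup>2 \<le> 8 * c\<^sup>2" using zero_le_power2[of c] by linarith
  then have "1 \<le> 8 * c\<^sup>2 / \<delta>\<^sup>2" using \<delta> by (simp add: field_simps)
  then have L: "L \<ge> 0" by (simp add: L_def)
  define \<eta> where "\<eta> = min (e / (2 * c)) (l / (L + 1))"
  show ?thesis
  proof (intro exI[of _ \<eta>] conjI ballI impI)
    show "\<eta> > 0" using e c_pos l L by (simp add: \<eta>_def)
    fix \<beta> assume \<beta>: "\<beta> \<in> {0<..1}" and near: "\<bar>\<beta> - 1\<bar> < \<eta>"
    then have "(1 - \<beta>) * L \<le> \<eta> * (L + 1)" using L by (intro mult_mono) auto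
    also have "\<dots> \<le> l"
    proof -
      have "\<eta> \<le> l / (L + 1)" by (simp add: \<eta>_def)
      then show ?thesis using L by (simp add: le_divide_eq)
    qed
    finally have "\<Lambda> \<beta> \<le> \<delta>" using \<beta> \<delta> by (intro shape_le_of_near_1) (auto simp: L_def l_def)
    moreover have "\<Lambda> 1 - 2 * c * (1 - \<beta>) \<le> \<Lambda> \<beta>" using \<beta> by (intro shape_ge_of_near_1) auto
    moreover have "2 * c * (1 - \<beta>) < e"
    proof -
      have "1 - \<beta> < e / (2 * c)" using near by (auto simp: \<eta>_def abs_less_iff)
      then show ?thesis using c_pos by (simp add: pos_less_divide_eq mult.commute)
    qed
    ultimately show "\<bar>\<Lambda> \<beta> - \<Lambda> 1\<bar> < e" using shape_1_nonneg \<delta> by (simp add: abs_less_iff)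
  qed
qed

lemma continuous_on_shape: "continuous_on {0<..1} \<Lambda>"
  unfolding continuous_on_iff dist_real_def
proof (intro ballI allI impI)
  fix \<alpha> e :: real assume "\<alpha> \<in> {0<..1}" "e > 0"
  then show "\<exists>\<eta>>0. \<forall>\<beta>\<in>{0<..1}. \<bar>\<beta> - \<alpha>\<bar> < \<eta> \<longrightarrow> \<bar>\<Lambda> \<beta> - \<Lambda> \<alpha>\<bar> < e"
    using shape_near_interior[of \<alpha> e] shape_near_1[of e] by (cases "\<alpha> = 1") auto
qed

lemma continuous_on_stretched_shape: "continuous_on {1..} (\<lambda>t. t * \<Lambda> (1 / t))"
proof -
  have "continuous_on {1..} (\<lambda>t::real. 1 / t)" by (intro continuous_intros) auto
  moreover have "(\<lambda>t::real. 1 / t) ` {1..} \<subseteq> {0<..1}" by (auto simp: field_simps)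
  ultimately show ?thesis
    by (intro continuous_intros continuous_on_compose2[OF continuous_on_shape]) auto
qed

lemma typical_stretched_tendsto:
  assumes typical_fb: "typical rational_slopes f b" and t: "t \<in> \<rat>" "t \<ge> 1"
  shows "(\<lambda>n. min_action b f (nat \<lceil>t * real n\<rceil>) (int n) / real n) \<longlonglongrightarrow> - (t * \<Lambda> (1 / t))"
proof -
  have "1 / t \<in> rational_slopes" using t by (auto simp: rational_slopes_def)
  from typicalD(3)[OF typical_fb this]
  have "(\<lambda>n. min_action b f (nat \<lceil>t * real n\<rceil>) (round0 (1 / t * real (nat \<lceil>t * real n\<rceil>))) / real n)
          \<longlonglongrightarrow> - \<Lambda> (1 / t) * t"
    by (rule tendsto_along_scaled_times) (use t in simp)
  then show ?thesis using round0_of_stretched_time[OF t(2)] by (simp add: mult.commute)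
qed

lemma stretched_shape_approx:
  assumes t: "t \<ge> 1" and e: "e > 0"
  obtains h where "h > 0"
    "\<And>s. s \<ge> 1 \<Longrightarrow> \<bar>s - t\<bar> < h \<Longrightarrow> \<bar>s * \<Lambda> (1 / s) - t * \<Lambda> (1 / t)\<bar> + c * \<bar>s - t\<bar> < e"
proof -
  obtain \<eta> where \<eta>: "\<eta> > 0"
    "\<And>s. s \<ge> 1 \<Longrightarrow> \<bar>s - t\<bar> < \<eta> \<Longrightarrow> \<bar>s * \<Lambda> (1 / s) - t * \<Lambda> (1 / t)\<bar> < e / 2"
    using continuous_on_stretched_shape t e unfolding continuous_on_iff dist_real_def
    by (metis atLeast_iff half_gt_zero)
  show ?thesis
  proof (rule that)
    show "min \<eta> (e / (2 * c)) > 0" using \<eta> e c_pos by simp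
    fix s assume "s \<ge> 1" "\<bar>s - t\<bar> < min \<eta> (e / (2 * c))"
    moreover have "c * \<bar>s - t\<bar> < e / 2" if "\<bar>s - t\<bar> < e / (2 * c)"
      using that c_pos by (simp add: less_divide_eq ac_simps)
    ultimately show "\<bar>s * \<Lambda> (1 / s) - t * \<Lambda> (1 / t)\<bar> + c * \<bar>s - t\<bar> < e"
      using \<eta>(2)[of s] by fastforce
  qed
qed

text \<open>The stretch \<open>ts n\<close> is squeezed between rational stretches \<open>r\<^sub>1 \<le> t < r\<^sub>2\<close>, at which
  convergence holds by typicality; changing the stretch costs at most \<open>c\<close> per time step.\<close>
lemma typical_min_action_stretched_tendsto:
  assumes typical_fb: "typical rational_slopes f b" and ts: "\<And>n. ts n \<ge> 1" and lim: "ts \<longlonglongrightarrow> t"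
  shows "(\<lambda>n. min_action b f (nat \<lceil>ts n * real n\<rceil>) (int n) / real n) \<longlonglongrightarrow> - t * \<Lambda> (1 / t)"
proof (rule tendsto_sandwich_approx)
  fix e :: real assume e: "e > 0"
  have t: "t \<ge> 1" using ts by (intro LIMSEQ_le_const[OF lim]) auto
  define G where "G s = s * \<Lambda> (1 / s)" for s
  define Y where "Y s n = min_action b f (nat \<lceil>s * real n\<rceil>) (int n) / real n" for s n
  define R where "R s n = real (nat \<lceil>s * real n\<rceil>) / real n" for s n
  have Y: "Y r \<longlonglongrightarrow> - G r" if "r \<in> \<rat>" "r \<ge> 1" for r
    unfolding Y_def G_def using typical_stretched_tendsto[OF typical_fb that] by simp
  have R: "R s \<longlonglongrightarrow> s" if "s \<ge> 0" for s
    unfolding R_def using ceiling_mult_ratio_tendsto[of "\<lambda>_. s" s] that by simp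
  have R_ts: "(\<lambda>n. R (ts n) n) \<longlonglongrightarrow> t"
    unfolding R_def using ts by (intro ceiling_mult_ratio_tendsto[OF lim]) (auto intro: order_trans[of 0 1])
  obtain h where h: "h > 0" "\<And>s. s \<ge> 1 \<Longrightarrow> \<bar>s - t\<bar> < h \<Longrightarrow> \<bar>G s - G t\<bar> + c * \<bar>s - t\<bar> < e"
    using stretched_shape_approx[OF t e] unfolding G_def by blast
  obtain r\<^sub>1 where r\<^sub>1: "r\<^sub>1 \<in> \<rat>" "1 \<le> r\<^sub>1" "r\<^sub>1 \<le> t" "t - r\<^sub>1 < h" "\<forall>\<^sub>F n in sequentially. r\<^sub>1 \<le> ts n"
    using rational_lower_approx[OF lim ts h(1)] .
  obtain r\<^sub>2 where r\<^sub>2: "r\<^sub>2 \<in> \<rat>" "t < r\<^sub>2" "r\<^sub>2 < t + h"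
    using Rats_dense_in_real[of t "t + h"] h by auto
  show "\<exists>lo up l u. lo \<longlonglongrightarrow> l \<and> up \<longlonglongrightarrow> u \<and> - t * \<Lambda> (1 / t) - e < l \<and> u < - t * \<Lambda> (1 / t) + e \<and>
          (\<forall>\<^sub>F n in sequentially. lo n \<le> Y (ts n) n \<and> Y (ts n) n \<le> up n)"
  proof (intro exI conjI)
    show "(\<lambda>n. Y r\<^sub>2 n - c * (R r\<^sub>2 n - R (ts n) n)) \<longlonglongrightarrow> - G r\<^sub>2 - c * (r\<^sub>2 - t)"
      using r\<^sub>2 t by (intro tendsto_intros Y R R_ts) auto
    show "(\<lambda>n. Y r\<^sub>1 n + c * (R (ts n) n - R r\<^sub>1 n)) \<longlonglongrightarrow> - G r\<^sub>1 + c * (t - r\<^sub>1)"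
      using r\<^sub>1 by (intro tendsto_intros Y R R_ts) auto
    have "\<bar>G r\<^sub>2 - G t\<bar> + c * (r\<^sub>2 - t) < e" "\<bar>G r\<^sub>1 - G t\<bar> + c * (t - r\<^sub>1) < e"
      using h(2)[of r\<^sub>2] h(2)[of r\<^sub>1] r\<^sub>1 r\<^sub>2 t by auto
    then show "- t * \<Lambda> (1 / t) - e < - G r\<^sub>2 - c * (r\<^sub>2 - t)"
      "- G r\<^sub>1 + c * (t - r\<^sub>1) < - t * \<Lambda> (1 / t) + e"
      by (auto simp: G_def abs_less_iff)
    have "\<forall>\<^sub>F n in sequentially. ts n < r\<^sub>2" using order_tendstoD(2)[OF lim r\<^sub>2(2)] .
    with r\<^sub>1(5) show "\<forall>\<^sub>F n in sequentially.
        Y r\<^sub>2 n - c * (R r\<^sub>2 n - R (ts n) n) \<le> Y (ts n) n \<and> Y (ts n) n \<le> Y r\<^sub>1 n + c * (R (ts n) n - R r\<^sub>1 n)"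
    proof eventually_elim
      case (elim n)
      have bf: "\<And>i. \<bar>b i\<bar> \<le> 1" "\<And>x. \<bar>f x\<bar> \<le> c" using typicalD[OF typical_fb] by auto
      show ?case unfolding Y_def R_def
        using min_action_stretched_mono[of b f c "ts n" r\<^sub>2 n, OF bf]
          min_action_stretched_mono[of b f c r\<^sub>1 "ts n" n, OF bf] elim ts[of n] r\<^sub>1
        by auto
    qed
  qed
qed

lemma integral_min_action_stretched_tendsto:
  assumes AE_typical_f: "AE b in law_B. typical rational_slopes f b"
    and ts: "\<And>n. ts n \<ge> 1" and lim: "ts \<longlonglongrightarrow> t"
  shows "(\<lambda>n. (\<integral>b. min_action b f (nat \<lceil>ts n * real n\<rceil>) (int n) \<partial>law_B) / real n)
           \<longlonglongrightarrow> - t * \<Lambda> (1 / t)"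
proof -
  interpret prob_space law_B by (rule prob_space_law_B)
  define m where "m n = nat \<lceil>ts n * real n\<rceil>" for n
  obtain K where K: "K > 0" "\<And>n. ts n \<le> K"
    using convergent_imp_Bseq[OF convergentI[OF lim]] unfolding Bseq_def by (auto dest: abs_le_D1)
  have n_le_m: "n \<le> m n" for n unfolding m_def using ts by (rule nat_ceiling_stretched_ge)
  have m_le: "real (m n) \<le> (K + 1) * real n" if "n > 0" for n
  proof -
    have "real (m n) \<le> ts n * real n + 1"
      unfolding m_def using real_nat_ceiling_bounds(2)[of "ts n * real n"] ts[of n] by simp
    also have "\<dots> \<le> K * real n + real n" using K(2)[of n] that by (intro add_mono mult_right_mono) auto
    finally show ?thesis by (simp add: algebra_simps)
  qed
  have "(\<lambda>n. \<integral>b. min_action b f (m n) (int n) / real n \<partial>law_B) \<longlonglongrightarrow> (\<integral>b. - t * \<Lambda> (1 / t) \<partial>law_B)"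
  proof (rule integral_dominated_convergence[where w="\<lambda>_. c * (K + 1)"])
    show "(\<lambda>b. min_action b f (m n) (int n) / real n) \<in> borel_measurable law_B" for n
      using n_le_m[of n] by (intro borel_measurable_divide borel_measurable_min_action) auto
    show "AE b in law_B. (\<lambda>n. min_action b f (m n) (int n) / real n) \<longlonglongrightarrow> - t * \<Lambda> (1 / t)"
      using AE_typical_f by eventually_elim (unfold m_def, rule typical_min_action_stretched_tendsto[OF _ ts lim])
    show "AE b in law_B. norm (min_action b f (m n) (int n) / real n) \<le> c * (K + 1)" for n
      using AE_typical_f
    proof eventually_elim
      case (elim b)
      show ?case
      proof (cases "n = 0")
        case False
        have "\<bar>min_action b f (m n) (int n)\<bar> \<le> c * real (m n)"
          using typicalD(2,1)[OF elim] n_le_m[of n] by (intro min_action_abs_le) auto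
        also have "\<dots> \<le> c * ((K + 1) * real n)" using m_le[of n] False c_pos by simp
        finally show ?thesis using False by (simp add: field_simps)
      qed (use c_pos K in simp)
    qed
  qed simp_all
  then show ?thesis by (simp add: m_def prob_space)
qed

end

theorem lemma4p2:
  fixes c q \<kappa> :: real and \<rho> \<Lambda> :: "real \<Rightarrow> real"
  assumes c_pos: "c > 0" and q_pos: "q > 0" and kappa: "\<kappa> > -1"
    and dens: "(\<rho> has_integral 1) UNIV"
    and even: "\<And>x. \<rho> (-x) = \<rho> x"
    and cont: "continuous_on {-c<..<c} \<rho>"
    and pos: "\<And>x. x \<in> {-c<..<c} \<Longrightarrow> \<rho> x > 0"
    and zero: "\<And>x. x \<notin> {-c<..<c} \<Longrightarrow> \<rho> x = 0"
    and edge: "((\<lambda>x. \<rho> x / \<bar>c - x\<bar> powr \<kappa>) \<longlongrightarrow> q) (at_left c)"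
    and shape: "is_shape_function \<rho> \<Lambda>"
  shows "AE f in law_F \<rho>.
           \<forall>(ts :: nat \<Rightarrow> real) (t :: real). (\<forall>n. ts n \<ge> 1) \<and> ts \<longlonglongrightarrow> t \<longrightarrow>
             (AE b in law_B.
                (\<lambda>n. min_action b f (nat \<lceil>ts n * real n\<rceil>) (int n) / real n)
                  \<longlonglongrightarrow> - t * \<Lambda> (1 / t)) \<and>
             ((\<lambda>n. (\<integral>b. min_action b f (nat \<lceil>ts n * real n\<rceil>) (int n) \<partial>law_B) / real n)
                  \<longlonglongrightarrow> - t * \<Lambda> (1 / t))"
proof -
  \<comment> \<open>Symmetry and edge behaviour of \<open>\<rho>\<close> only matter for the existence of \<open>\<Lambda>\<close>, which is assumed.\<close>
  interpret shape_setting c \<rho> \<Lambda>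
    using c_pos dens cont pos zero shape by unfold_locales
  have "AE f in law_F \<rho>. AE b in law_B. typical rational_slopes f b"
    by (rule AE_typical[OF countable_rational_slopes rational_slopes_subset])
  then show ?thesis
  proof eventually_elim
    case (elim f)
    show ?case
    proof (intro allI impI conjI)
      fix ts :: "nat \<Rightarrow> real" and t :: real
      assume "(\<forall>n. ts n \<ge> 1) \<and> ts \<longlonglongrightarrow> t"
      then have ts: "\<And>n. ts n \<ge> 1" and lim: "ts \<longlonglongrightarrow> t" by auto
      show "AE b in law_B. (\<lambda>n. min_action b f (nat \<lceil>ts n * real n\<rceil>) (int n) / real n)
              \<longlonglongrightarrow> - t * \<Lambda> (1 / t)"
        using elim by eventually_elim (rule typical_min_action_stretched_tendsto[OF _ ts lim])
      show "(\<lambda>n. (\<integral>b. min_action b f (nat \<lceil>ts n * real n\<rceil>) (int n) \<partial>law_B) / real n)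
              \<longlonglongrightarrow> - t * \<Lambda> (1 / t)"
        by (rule integral_min_action_stretched_tendsto[OF elim ts lim])
    qed
  qed
qed

end
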